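(* If $G$ is a graph with no induced claw $K_{1,3}$, then $\operatorname{reg}(G)\le 2\operatorname{im}(G)$.
   Context: $\operatorname{reg}(G)=\max\{j\ge0:\widetilde H_{j-1}(\operatorname{Ind}(G[S]);\Bbbk)\neq0\text{ for some }S\subseteq V(G)\}$ over a field $\Bbbk$ ($\operatorname{Ind}$ = independence complex). $\operatorname{im}(G)$ is the induced matching number. *)

theory Defs
  imports Main
begin

definition simple_graph :: "'a set \<Rightarrow> ('a \<Rightarrow> 'a \<Rightarrow> bool) \<Rightarrow> bool" where
  "simple_graph V E \<longleftrightarrow> finite V \<and> (\<forall>u v. E u v \<longrightarrow> E v u)
     \<and> (\<forall>v. \<not> E v v) \<and> (\<forall>u v. E u v \<longrightarrow> u \<in> V \<and> v \<in> V)"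

definition claw_free :: "'a set \<Rightarrow> ('a \<Rightarrow> 'a \<Rightarrow> bool) \<Rightarrow> bool" where
  "claw_free V E \<longleftrightarrow> \<not> (\<exists>c a b d. c \<in> V \<and> a \<in> V \<and> b \<in> V \<and> d \<in> V
      \<and> E c a \<and> E c b \<and> E c d
      \<and> a \<noteq> b \<and> a \<noteq> d \<and> b \<noteq> d
      \<and> \<not> E a b \<and> \<not> E a d \<and> \<not> E b d)"

definition ind_complex :: "('a \<Rightarrow> 'a \<Rightarrow> bool) \<Rightarrow> 'a set \<Rightarrow> 'a set set" where
  "ind_complex E S = {F. F \<subseteq> S \<and> (\<forall>u\<in>F. \<forall>v\<in>F. \<not> E u v)}"

text \<open>Simplicial chains: a chain of "size" n (i.e. of dimension n-1) is a finitely
supported coefficient function on the faces of cardinality n.  Faces are oriented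
by the linear order on vertices.\<close>
definition is_chain :: "'a set set \<Rightarrow> nat \<Rightarrow> ('a set \<Rightarrow> 'k::field) \<Rightarrow> bool" where
  "is_chain \<Delta> n c \<longleftrightarrow> (\<forall>\<sigma>. c \<sigma> \<noteq> 0 \<longrightarrow> \<sigma> \<in> \<Delta> \<and> finite \<sigma> \<and> card \<sigma> = n)"

text \<open>Simplicial boundary map from chains on faces of cardinality n+1 to chains on faces of
cardinality n (with the augmentation to the empty face when n = 0):
the coefficient of \<tau> in the boundary of \<tau> \<union> {v} is (-1)^(position of v).\<close>
definition bdry :: "'a::linorder set set \<Rightarrow> nat \<Rightarrow> ('a set \<Rightarrow> 'k::field) \<Rightarrow> ('a set \<Rightarrow> 'k)" where
  "bdry \<Delta> n c \<tau> = (if \<tau> \<in> \<Delta> \<and> finite \<tau> \<and> card \<tau> = n then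
      (\<Sum>v\<in>{v\<in>\<Union>\<Delta>. v \<notin> \<tau> \<and> insert v \<tau> \<in> \<Delta>}.
          (-1) ^ card {u\<in>\<tau>. u < v} * c (insert v \<tau>))
    else 0)"

text \<open>Reduced homology H~_{j-1}(\<Delta>; k) is nonzero: there is a (j-1)-cycle that is not a
boundary.  (For j = 0 every (-1)-chain is a cycle.)\<close>
definition red_hom_nonzero :: "'k::field itself \<Rightarrow> 'a::linorder set set \<Rightarrow> nat \<Rightarrow> bool" where
  "red_hom_nonzero K \<Delta> j \<longleftrightarrow>
     (\<exists>z :: 'a set \<Rightarrow> 'k. is_chain \<Delta> j z
        \<and> (j > 0 \<longrightarrow> bdry \<Delta> (j - 1) z = (\<lambda>_. 0))
        \<and> \<not> (\<exists>d :: 'a set \<Rightarrow> 'k. is_chain \<Delta> (j + 1) d \<and> bdry \<Delta> j d = z))"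

text \<open>Castelnuovo--Mumford regularity via Hochster's formula, over the field 'k.\<close>
definition reg :: "'k::field itself \<Rightarrow> 'a::linorder set \<Rightarrow> ('a \<Rightarrow> 'a \<Rightarrow> bool) \<Rightarrow> nat" where
  "reg K V E = Max {j. \<exists>S. S \<subseteq> V \<and> red_hom_nonzero K (ind_complex E S) j}"

definition induced_matching :: "'a set \<Rightarrow> ('a \<Rightarrow> 'a \<Rightarrow> bool) \<Rightarrow> 'a set set \<Rightarrow> bool" where
  "induced_matching V E M \<longleftrightarrow>
     (\<forall>e\<in>M. \<exists>u v. u \<in> V \<and> v \<in> V \<and> E u v \<and> e = {u, v})
     \<and> (\<forall>e\<in>M. \<forall>f\<in>M. e \<noteq> f \<longrightarrow> e \<inter> f = {} \<and> (\<forall>x\<in>e. \<forall>y\<in>f. \<not> E x y))"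

definition im :: "'a set \<Rightarrow> ('a \<Rightarrow> 'a \<Rightarrow> bool) \<Rightarrow> nat" where
  "im V E = Max {card M | M. induced_matching V E M}"

end

theory Submission
  imports Defs "HOL-Library.Disjoint_Sets"
begin

text \<open>
  It suffices to show \<open>j \<le> 2 im(G[S])\<close> whenever \<open>H~_{j-1}(Ind G[S]) \<noteq> 0\<close>, by induction on
  \<open>|S|\<close>. For a vertex \<open>v\<close>, the long exact sequence of the pair \<open>(Ind G[S], Ind G[S - v])\<close> shows
  that such a class survives either in \<open>Ind G[S - v]\<close> in the same degree or in the link
  \<open>Ind G[S - N[v]]\<close> one degree lower. Without edges the complex is a cone (or \<open>{\<emptyset>}\<close>), so only
  \<open>j = 0\<close> occurs. Otherwise pick an edge \<open>uv\<close> and split at \<open>v\<close>. In the link case the neighbours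
  of \<open>u\<close> in \<open>S - N[v]\<close> form a clique, as two non-adjacent ones would form a claw with \<open>u\<close> and
  \<open>v\<close>; deleting this clique vertex by vertex costs at most one further degree, and the remaining
  set \<open>L\<close> avoids \<open>N[u] \<union> N[v]\<close>, so \<open>uv\<close> extends every induced matching of \<open>G[L]\<close> and
  \<open>j \<le> (2 im(G[L]) + 1) + 1 \<le> 2 im(G[S])\<close>.
\<close>

definition insert_sign :: "'a::linorder \<Rightarrow> 'a set \<Rightarrow> 'k::field" where
  "insert_sign v \<tau> = (-1) ^ card {u\<in>\<tau>. u < v}"

lemma insert_sign_square: "insert_sign v \<tau> * insert_sign v \<tau> = (1::'k::field)"
  unfolding insert_sign_def by (simp add: power_mult_distrib[symmetric])

lemma insert_sign_nonzero: "insert_sign v \<tau> \<noteq> (0::'k::field)"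
  unfolding insert_sign_def by simp

lemma card_less_insert:
  assumes "finite \<tau>" "x \<notin> \<tau>"
  shows "card {u\<in>insert x \<tau>. u < y} = card {u\<in>\<tau>. u < y} + (if x < y then 1 else 0)"
proof -
  have "{u\<in>insert x \<tau>. u < y} = (if x < y then insert x {u\<in>\<tau>. u < y} else {u\<in>\<tau>. u < y})"
    by auto
  then show ?thesis using assms by simp
qed

lemma insert_sign_swap:
  assumes "finite \<tau>" "x \<noteq> y" "x \<notin> \<tau>" "y \<notin> \<tau>"
  shows "insert_sign x \<tau> * insert_sign y (insert x \<tau>)
       = - (insert_sign y \<tau> * insert_sign x (insert y \<tau>) :: 'k::field)"
proof -
  have "x < y \<longleftrightarrow> \<not> y < x" using assms(2) by auto
  then show ?thesis
    unfolding insert_sign_def card_less_insert[OF assms(1,3)] card_less_insert[OF assms(1,4)]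
    by (simp add: power_add)
qed

lemma bdry_altdef:
  "bdry \<Delta> n c \<tau> = (if \<tau> \<in> \<Delta> \<and> finite \<tau> \<and> card \<tau> = n then
      (\<Sum>x\<in>{x. x \<notin> \<tau> \<and> insert x \<tau> \<in> \<Delta>}. insert_sign x \<tau> * c (insert x \<tau>)) else 0)"
proof -
  have "{v\<in>\<Union>\<Delta>. v \<notin> \<tau> \<and> insert v \<tau> \<in> \<Delta>} = {x. x \<notin> \<tau> \<and> insert x \<tau> \<in> \<Delta>}" by blast
  then show ?thesis unfolding bdry_def insert_sign_def by simp
qed

lemma bdry_eq_0: "\<not> (\<tau> \<in> \<Delta> \<and> finite \<tau> \<and> card \<tau> = n) \<Longrightarrow> bdry \<Delta> n c \<tau> = 0"
  by (simp only: bdry_altdef if_False)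

lemma is_chain_eq_0: "is_chain \<Delta> n c \<Longrightarrow> \<not> (\<sigma> \<in> \<Delta> \<and> finite \<sigma> \<and> card \<sigma> = n) \<Longrightarrow> c \<sigma> = 0"
  unfolding is_chain_def by blast

lemma is_chainD: "is_chain \<Delta> n c \<Longrightarrow> c \<sigma> \<noteq> 0 \<Longrightarrow> \<sigma> \<in> \<Delta> \<and> finite \<sigma> \<and> card \<sigma> = n"
  unfolding is_chain_def by blast

lemma is_chain_bdry: "is_chain \<Delta> n (bdry \<Delta> n c)"
  unfolding is_chain_def using bdry_eq_0 by blast

lemma is_chain_subset: "\<Delta>' \<subseteq> \<Delta> \<Longrightarrow> is_chain \<Delta>' n c \<Longrightarrow> is_chain \<Delta> n c"
  unfolding is_chain_def by blast

lemma is_chain_add: "is_chain \<Delta> n c \<Longrightarrow> is_chain \<Delta> n d \<Longrightarrow> is_chain \<Delta> n (\<lambda>\<sigma>. c \<sigma> + d \<sigma>)"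
  unfolding is_chain_def by force

lemma is_chain_diff: "is_chain \<Delta> n c \<Longrightarrow> is_chain \<Delta> n d \<Longrightarrow> is_chain \<Delta> n (\<lambda>\<sigma>. c \<sigma> - d \<sigma>)"
  unfolding is_chain_def by force

lemma bdry_zero: "bdry \<Delta> n (\<lambda>_. 0::'k::field) = (\<lambda>_. 0)"
  by (simp add: bdry_def fun_eq_iff)

lemma bdry_add: "bdry \<Delta> n (\<lambda>\<sigma>. c \<sigma> + d \<sigma>) \<tau> = bdry \<Delta> n c \<tau> + (bdry \<Delta> n d \<tau> :: 'k::field)"
  by (simp add: bdry_def sum.distrib distrib_left)

lemma bdry_diff: "bdry \<Delta> n (\<lambda>\<sigma>. c \<sigma> - d \<sigma>) \<tau> = bdry \<Delta> n c \<tau> - (bdry \<Delta> n d \<tau> :: 'k::field)"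
  by (simp add: bdry_def sum_subtractf right_diff_distrib)

lemma red_hom_nonzero_imp_face:
  fixes K :: "'k::field itself" and \<Delta> :: "'a::linorder set set"
  assumes "red_hom_nonzero K \<Delta> j"
  shows "\<exists>\<sigma>\<in>\<Delta>. finite \<sigma> \<and> card \<sigma> = j"
proof (rule ccontr)
  assume no_face: "\<not> ?thesis"
  obtain z :: "'a set \<Rightarrow> 'k" where z: "is_chain \<Delta> j z"
    and not_bdry: "\<not> (\<exists>d. is_chain \<Delta> (j + 1) d \<and> bdry \<Delta> j d = z)"
    using assms unfolding red_hom_nonzero_def by blast
  have "z = (\<lambda>_. 0)" using z no_face unfolding is_chain_def by fastforce
  then show False using not_bdry bdry_zero[of \<Delta> j] by (auto simp: is_chain_def)
qed

definition downward_closed :: "'a set set \<Rightarrow> bool" where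
  "downward_closed \<Delta> \<longleftrightarrow> (\<forall>\<sigma>\<in>\<Delta>. \<forall>\<tau>\<subseteq>\<sigma>. \<tau> \<in> \<Delta>)"

lemma downward_closedD: "downward_closed \<Delta> \<Longrightarrow> \<sigma> \<in> \<Delta> \<Longrightarrow> \<tau> \<subseteq> \<sigma> \<Longrightarrow> \<tau> \<in> \<Delta>"
  unfolding downward_closed_def by blast

lemma bdry_bdry:
  assumes "downward_closed \<Delta>" "finite (\<Union>\<Delta>)"
  shows "bdry \<Delta> n (bdry \<Delta> (Suc n) c) = (\<lambda>_. 0::'k::field)"
proof
  fix \<tau>
  show "bdry \<Delta> n (bdry \<Delta> (Suc n) c) \<tau> = 0"
  proof (cases "\<tau> \<in> \<Delta> \<and> finite \<tau> \<and> card \<tau> = n")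
    case True
    define B where "B \<rho> = {x. x \<notin> \<rho> \<and> insert x \<rho> \<in> \<Delta>}" for \<rho>
    define t where "t x y = insert_sign x \<tau> * insert_sign y (insert x \<tau>)
      * c (insert y (insert x \<tau>))" for x y
    have fin_B: "finite (B \<rho>)" for \<rho>
      using assms(2) by (rule finite_subset[rotated]) (auto simp: B_def)
    have inner: "bdry \<Delta> (Suc n) c (insert x \<tau>) = (\<Sum>y\<in>B (insert x \<tau>).
        insert_sign y (insert x \<tau>) * c (insert y (insert x \<tau>)))" if "x \<in> B \<tau>" for x
      using that True by (simp add: bdry_altdef B_def)
    have "bdry \<Delta> n (bdry \<Delta> (Suc n) c) \<tau>
        = (\<Sum>x\<in>B \<tau>. insert_sign x \<tau> * bdry \<Delta> (Suc n) c (insert x \<tau>))"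
      using True by (simp add: bdry_altdef B_def)
    also have "\<dots> = (\<Sum>x\<in>B \<tau>. \<Sum>y\<in>B (insert x \<tau>). t x y)"
      by (rule sum.cong) (simp_all add: inner sum_distrib_left t_def mult.assoc)
    also have "\<dots> = (\<Sum>p\<in>Sigma (B \<tau>) (\<lambda>x. B (insert x \<tau>)). case_prod t p)"
      using fin_B by (simp add: sum.Sigma)
    txt \<open>Pairing \<open>(x, y)\<close> with \<open>(y, x)\<close>, rather than deriving \<open>s = - s\<close>, also covers
      characteristic 2.\<close>
    also have "\<dots> = 0"
    proof (rule sum_involution_eq_0[where h = prod.swap])
      fix p assume "p \<in> Sigma (B \<tau>) (\<lambda>x. B (insert x \<tau>))"
      then obtain x y where p: "p = (x, y)" "x \<notin> \<tau>" "y \<notin> \<tau>" "x \<noteq> y"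
        and face: "insert y (insert x \<tau>) \<in> \<Delta>"
        by (auto simp: B_def)
      have "insert y \<tau> \<in> \<Delta>"
        by (rule downward_closedD[OF assms(1) face]) blast
      then show "prod.swap p \<in> Sigma (B \<tau>) (\<lambda>x. B (insert x \<tau>))"
        using p face by (simp add: B_def insert_commute[of x y])
      show "prod.swap (prod.swap p) = p" by simp
      show "prod.swap p \<noteq> p" using p by simp
      show "case_prod t (prod.swap p) + case_prod t p = 0"
        using insert_sign_swap[of \<tau> x y, where 'k='k] True p
        by (simp add: t_def insert_commute[of x y])
    qed
    finally show ?thesis .
  qed (rule bdry_eq_0)
qed

lemma bdry_subcomplex:
  assumes "\<Delta>' \<subseteq> \<Delta>" "downward_closed \<Delta>'" "finite (\<Union>\<Delta>)" "is_chain \<Delta>' (Suc n) c"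
  shows "bdry \<Delta> n c = bdry \<Delta>' n c"
proof
  fix \<tau>
  have fin: "finite {x. x \<notin> \<tau> \<and> insert x \<tau> \<in> \<Delta>}"
    using assms(3) by (rule finite_subset[rotated]) auto
  have vanish: "c (insert x \<tau>) = 0" if "insert x \<tau> \<notin> \<Delta>'" for x
    using assms(4) that unfolding is_chain_def by blast
  show "bdry \<Delta> n c \<tau> = bdry \<Delta>' n c \<tau>"
  proof (cases "\<tau> \<in> \<Delta>'")
    case True
    have "(\<Sum>x\<in>{x. x \<notin> \<tau> \<and> insert x \<tau> \<in> \<Delta>}. insert_sign x \<tau> * c (insert x \<tau>))
        = (\<Sum>x\<in>{x. x \<notin> \<tau> \<and> insert x \<tau> \<in> \<Delta>'}. insert_sign x \<tau> * c (insert x \<tau>))"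
      using assms(1) vanish by (intro sum.mono_neutral_right[OF fin]) auto
    then show ?thesis using True assms(1) by (auto simp: bdry_altdef)
  next
    case False
    then have "insert x \<tau> \<notin> \<Delta>'" for x
      using downward_closedD[OF assms(2)] by blast
    then show ?thesis using False vanish by (simp add: bdry_altdef)
  qed
qed

definition chain_del :: "'a \<Rightarrow> ('a set \<Rightarrow> 'k::zero) \<Rightarrow> 'a set \<Rightarrow> 'k" where
  "chain_del v c \<sigma> = (if v \<in> \<sigma> then 0 else c \<sigma>)"

definition chain_link :: "'a::linorder \<Rightarrow> ('a set \<Rightarrow> 'k::field) \<Rightarrow> 'a set \<Rightarrow> 'k" where
  "chain_link v c \<rho> = (if v \<in> \<rho> then 0 else insert_sign v \<rho> * c (insert v \<rho>))"

definition chain_cone :: "'a::linorder \<Rightarrow> ('a set \<Rightarrow> 'k::field) \<Rightarrow> 'a set \<Rightarrow> 'k" where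
  "chain_cone v c \<sigma> = (if v \<in> \<sigma> then insert_sign v (\<sigma> - {v}) * c (\<sigma> - {v}) else 0)"

lemma chain_eqI:
  assumes "chain_del v c = chain_del v d" "chain_link v c = chain_link v (d :: 'a::linorder set \<Rightarrow> 'k::field)"
  shows "c = d"
proof
  fix \<sigma>
  show "c \<sigma> = d \<sigma>"
  proof (cases "v \<in> \<sigma>")
    case True
    then have "insert v (\<sigma> - {v}) = \<sigma>" by blast
    then have "insert_sign v (\<sigma> - {v}) * c \<sigma> = insert_sign v (\<sigma> - {v}) * d \<sigma>"
      using fun_cong[OF assms(2), of "\<sigma> - {v}"] by (simp add: chain_link_def)
    then show ?thesis using insert_sign_nonzero[of v "\<sigma> - {v}", where 'k='k] by simp
  next
    case False
    then show ?thesis using fun_cong[OF assms(1), of \<sigma>] by (simp add: chain_del_def)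
  qed
qed

lemma chain_del_idem: "chain_del v (chain_del v c) = chain_del v c"
  by (simp add: fun_eq_iff chain_del_def)

lemma chain_link_chain_del: "chain_link v (chain_del v c) = (\<lambda>_. 0)"
  by (simp add: fun_eq_iff chain_link_def chain_del_def)

lemma chain_del_cone: "chain_del v (chain_cone v c) = (\<lambda>_. 0)"
  by (simp add: fun_eq_iff chain_del_def chain_cone_def)

lemma chain_link_cone:
  fixes c :: "'a::linorder set \<Rightarrow> 'k::field"
  assumes "\<And>\<sigma>. v \<in> \<sigma> \<Longrightarrow> c \<sigma> = 0"
  shows "chain_link v (chain_cone v c) = c"
proof
  fix \<rho>
  have "v \<notin> \<rho> \<Longrightarrow> insert v \<rho> - {v} = \<rho>" by blast
  then show "chain_link v (chain_cone v c) \<rho> = c \<rho>"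
    using assms insert_sign_square[of v \<rho>, where 'k='k]
    by (simp add: chain_link_def chain_cone_def mult.assoc[symmetric])
qed

lemma chain_link_size_0:
  assumes "is_chain \<Delta> 0 c"
  shows "chain_link v c = (\<lambda>_. 0)"
proof
  fix \<rho>
  have "\<not> (insert v \<rho> \<in> \<Delta> \<and> finite (insert v \<rho>) \<and> card (insert v \<rho>) = 0)"
    using card_0_eq by blast
  then show "chain_link v c \<rho> = 0"
    using is_chain_eq_0[OF assms] by (simp add: chain_link_def)
qed

lemma mem_ind_complex: "\<sigma> \<in> ind_complex E S \<longleftrightarrow> \<sigma> \<subseteq> S \<and> (\<forall>u\<in>\<sigma>. \<forall>w\<in>\<sigma>. \<not> E u w)"
  by (simp add: ind_complex_def)

lemma downward_closed_ind_complex: "downward_closed (ind_complex E S)"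
  unfolding downward_closed_def ind_complex_def by blast

lemma finite_Union_ind_complex: "finite S \<Longrightarrow> finite (\<Union>(ind_complex E S))"
  by (rule finite_subset[of _ S]) (auto simp: mem_ind_complex)

lemma ind_complex_mono: "S \<subseteq> T \<Longrightarrow> ind_complex E S \<subseteq> ind_complex E T"
  unfolding ind_complex_def by blast

lemma red_hom_nonzero_ind_complex_empty: "red_hom_nonzero (K::'k::field itself) (ind_complex E {}) 0"
proof -
  define z :: "'a::linorder set \<Rightarrow> 'k" where "z = (\<lambda>\<sigma>. if \<sigma> = {} then 1 else 0)"
  have cx: "ind_complex E {} = {{}}" by (auto simp: mem_ind_complex)
  have "bdry (ind_complex E {}) 0 d {} = 0" for d :: "'a set \<Rightarrow> 'k"
    by (simp add: bdry_altdef cx)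
  then have "bdry (ind_complex E {}) 0 d \<noteq> z" for d
    by (metis z_def one_neq_zero)
  moreover have "is_chain (ind_complex E {}) 0 z" by (simp add: z_def is_chain_def cx)
  ultimately show ?thesis unfolding red_hom_nonzero_def by blast
qed

locale vertex_split =
  fixes E :: "'a::linorder \<Rightarrow> 'a \<Rightarrow> bool" and S :: "'a set" and v :: 'a
  assumes sym: "\<And>a b. E a b \<Longrightarrow> E b a" and irrefl: "\<And>a. \<not> E a a"
    and finite_S: "finite S" and v_in_S: "v \<in> S"
begin

abbreviation "cx \<equiv> ind_complex E S"
abbreviation "del_cx \<equiv> ind_complex E (S - {v})"
text \<open>The link of \<open>v\<close> in \<open>cx\<close> is the independence complex of \<open>G[S - N[v]]\<close>.\<close>
abbreviation "link_cx \<equiv> ind_complex E (S - insert v {x. E v x})"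

lemma insert_mem_cx_iff:
  assumes "v \<notin> \<rho>"
  shows "insert v \<rho> \<in> cx \<longleftrightarrow> \<rho> \<in> link_cx"
proof -
  have "(\<forall>u\<in>insert v \<rho>. \<forall>w\<in>insert v \<rho>. \<not> E u w)
      \<longleftrightarrow> (\<forall>u\<in>\<rho>. \<not> E v u) \<and> (\<forall>u\<in>\<rho>. \<forall>w\<in>\<rho>. \<not> E u w)"
    using sym irrefl by blast
  then show ?thesis
    using assms v_in_S unfolding mem_ind_complex by blast
qed

lemma insert_mem_cx_card_iff:
  assumes "v \<notin> \<rho>"
  shows "(insert v \<rho> \<in> cx \<and> finite (insert v \<rho>) \<and> card (insert v \<rho>) = Suc n)
    \<longleftrightarrow> (\<rho> \<in> link_cx \<and> finite \<rho> \<and> card \<rho> = n)"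
  using insert_mem_cx_iff[OF assms] assms by (cases "finite \<rho>") simp_all

lemma del_cx_subset: "del_cx \<subseteq> cx"
  by (rule ind_complex_mono) blast

lemma link_cx_subset: "link_cx \<subseteq> del_cx"
  by (rule ind_complex_mono) blast

lemma mem_del_cx_iff: "\<sigma> \<in> del_cx \<longleftrightarrow> \<sigma> \<in> cx \<and> v \<notin> \<sigma>"
  by (auto simp: mem_ind_complex)

lemma is_chain_chain_del:
  assumes "is_chain cx n c"
  shows "is_chain del_cx n (chain_del v c)"
  unfolding is_chain_def
proof (intro allI impI)
  fix \<sigma> assume "chain_del v c \<sigma> \<noteq> 0"
  then have "v \<notin> \<sigma>" and nz: "c \<sigma> \<noteq> 0" by (simp_all add: chain_del_def split: if_splits)
  then show "\<sigma> \<in> del_cx \<and> finite \<sigma> \<and> card \<sigma> = n"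
    using is_chainD[OF assms nz] mem_del_cx_iff by blast
qed

lemma is_chain_chain_link:
  assumes "is_chain cx (Suc n) c"
  shows "is_chain link_cx n (chain_link v c)"
  unfolding is_chain_def
proof (intro allI impI)
  fix \<rho> assume "chain_link v c \<rho> \<noteq> 0"
  then have v: "v \<notin> \<rho>" and nz: "c (insert v \<rho>) \<noteq> 0"
    by (auto simp: chain_link_def split: if_splits)
  then show "\<rho> \<in> link_cx \<and> finite \<rho> \<and> card \<rho> = n"
    using is_chainD[OF assms nz] insert_mem_cx_card_iff[OF v] by blast
qed

lemma is_chain_chain_cone:
  assumes "is_chain link_cx n c"
  shows "is_chain cx (Suc n) (chain_cone v c)"
  unfolding is_chain_def
proof (intro allI impI)
  fix \<sigma> assume "chain_cone v c \<sigma> \<noteq> 0"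
  then have v: "v \<in> \<sigma>" and nz: "c (\<sigma> - {v}) \<noteq> 0"
    by (auto simp: chain_cone_def split: if_splits)
  then have link: "\<sigma> - {v} \<in> link_cx" and fin: "finite \<sigma>" and card: "card (\<sigma> - {v}) = n"
    using is_chainD[OF assms nz] by auto
  have "insert v (\<sigma> - {v}) \<in> cx" using link insert_mem_cx_iff by blast
  then have "\<sigma> \<in> cx" using v by (simp add: insert_absorb)
  then show "\<sigma> \<in> cx \<and> finite \<sigma> \<and> card \<sigma> = Suc n"
    using fin card card_Suc_Diff1[OF fin v] by simp
qed

lemma notin_link_cx: "\<sigma> \<in> link_cx \<Longrightarrow> v \<notin> \<sigma>"
  unfolding mem_ind_complex by blast

lemma is_chain_link_cx_eq_0: "is_chain link_cx n c \<Longrightarrow> v \<in> \<sigma> \<Longrightarrow> c \<sigma> = 0"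
  by (erule is_chain_eq_0) (use notin_link_cx in blast)

lemma cx_extensions_insert_vertex:
  assumes "v \<notin> \<rho>"
  shows "{x. x \<notin> insert v \<rho> \<and> insert x (insert v \<rho>) \<in> cx} = {x. x \<notin> \<rho> \<and> insert x \<rho> \<in> link_cx}"
proof -
  have "x \<notin> insert v \<rho> \<and> insert x (insert v \<rho>) \<in> cx \<longleftrightarrow> x \<notin> \<rho> \<and> insert x \<rho> \<in> link_cx" for x
  proof (cases "x = v")
    case True
    then show ?thesis using notin_link_cx[of "insert v \<rho>"] by auto
  next
    case False
    then show ?thesis
      using assms insert_mem_cx_iff[of "insert x \<rho>"] by (simp add: insert_commute[of x v])
  qed
  then show ?thesis by blast
qed

lemma del_cx_extensions:
  assumes "v \<notin> \<tau>"
  shows "{x. x \<notin> \<tau> \<and> insert x \<tau> \<in> del_cx} = {x. x \<notin> \<tau> \<and> insert x \<tau> \<in> cx} - {v}"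
  using assms by (auto simp: mem_del_cx_iff)

lemma chain_link_bdry:
  fixes c :: "'a set \<Rightarrow> 'k::field"
  shows "chain_link v (bdry cx (Suc n) c) = (\<lambda>\<rho>. - bdry link_cx n (chain_link v c) \<rho>)"
proof
  fix \<rho>
  show "chain_link v (bdry cx (Suc n) c) \<rho> = - bdry link_cx n (chain_link v c) \<rho>"
  proof (cases "v \<notin> \<rho> \<and> \<rho> \<in> link_cx \<and> finite \<rho> \<and> card \<rho> = n")
    case True
    then have v: "v \<notin> \<rho>" and fin: "finite \<rho>" by auto
    have face: "insert v \<rho> \<in> cx \<and> finite (insert v \<rho>) \<and> card (insert v \<rho>) = Suc n"
      using True insert_mem_cx_card_iff[OF v] by blast
    define X where "X = {x. x \<notin> \<rho> \<and> insert x \<rho> \<in> link_cx}"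
    have "bdry cx (Suc n) c (insert v \<rho>)
        = (\<Sum>x\<in>X. insert_sign x (insert v \<rho>) * c (insert x (insert v \<rho>)))"
      unfolding bdry_altdef cx_extensions_insert_vertex[OF v] X_def[symmetric] using face by simp
    then have "chain_link v (bdry cx (Suc n) c) \<rho>
        = (\<Sum>x\<in>X. insert_sign v \<rho> * insert_sign x (insert v \<rho>) * c (insert x (insert v \<rho>)))"
      using v by (simp add: chain_link_def sum_distrib_left mult.assoc)
    also have "\<dots> = (\<Sum>x\<in>X. - (insert_sign x \<rho> * chain_link v c (insert x \<rho>)))"
    proof (rule sum.cong[OF refl])
      fix x assume "x \<in> X"
      then have "x \<notin> \<rho>" and "insert x \<rho> \<in> link_cx" by (simp_all add: X_def)
      from this(2) have vx: "v \<notin> insert x \<rho>" by (rule notin_link_cx)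
      then have "v \<noteq> x" by blast
      have swap: "insert_sign v \<rho> * insert_sign x (insert v \<rho>)
          = - (insert_sign x \<rho> * insert_sign v (insert x \<rho>) :: 'k)"
        by (rule insert_sign_swap[OF fin \<open>v \<noteq> x\<close> v \<open>x \<notin> \<rho>\<close>])
      have link: "chain_link v c (insert x \<rho>) = insert_sign v (insert x \<rho>) * c (insert x (insert v \<rho>))"
        using vx by (simp add: chain_link_def insert_commute[of v x])
      show "insert_sign v \<rho> * insert_sign x (insert v \<rho>) * c (insert x (insert v \<rho>))
          = - (insert_sign x \<rho> * chain_link v c (insert x \<rho>))"
        unfolding swap link by (simp add: mult.assoc)
    qed
    also have "\<dots> = - bdry link_cx n (chain_link v c) \<rho>"
      using True by (simp add: X_def bdry_altdef sum_negf)
    finally show ?thesis .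
  next
    case not_face: False
    have "\<not> (\<rho> \<in> link_cx \<and> finite \<rho> \<and> card \<rho> = n)" using not_face notin_link_cx by blast
    then have "bdry link_cx n (chain_link v c) \<rho> = 0" by (rule bdry_eq_0)
    moreover have "chain_link v (bdry cx (Suc n) c) \<rho> = 0"
    proof (cases "v \<in> \<rho>")
      case False
      then have "\<not> (insert v \<rho> \<in> cx \<and> finite (insert v \<rho>) \<and> card (insert v \<rho>) = Suc n)"
        using not_face insert_mem_cx_card_iff[OF False] by blast
      then have "bdry cx (Suc n) c (insert v \<rho>) = 0" by (rule bdry_eq_0)
      then show ?thesis by (simp add: chain_link_def)
    qed (simp add: chain_link_def)
    ultimately show ?thesis by simp
  qed
qed

lemma chain_del_bdry:
  fixes c :: "'a set \<Rightarrow> 'k::field"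
  assumes c: "is_chain cx (Suc n) c"
  shows "chain_del v (bdry cx n c) = (\<lambda>\<tau>. bdry del_cx n (chain_del v c) \<tau> + chain_link v c \<tau>)"
proof
  fix \<tau>
  show "chain_del v (bdry cx n c) \<tau> = bdry del_cx n (chain_del v c) \<tau> + chain_link v c \<tau>"
  proof (cases "v \<notin> \<tau> \<and> \<tau> \<in> cx \<and> finite \<tau> \<and> card \<tau> = n")
    case True
    then have v: "v \<notin> \<tau>" and del_face: "\<tau> \<in> del_cx \<and> finite \<tau> \<and> card \<tau> = n"
      using mem_del_cx_iff by auto
    define B where "B = {x. x \<notin> \<tau> \<and> insert x \<tau> \<in> cx}"
    have "finite B"
      using finite_Union_ind_complex[OF finite_S] by (rule finite_subset[rotated]) (auto simp: B_def)
    have v_term: "(if v \<in> B then insert_sign v \<tau> * c (insert v \<tau>) else 0) = chain_link v c \<tau>"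
    proof (cases "v \<in> B")
      case False
      then have "\<not> (insert v \<tau> \<in> cx \<and> finite (insert v \<tau>) \<and> card (insert v \<tau>) = Suc n)"
        using v by (simp add: B_def)
      then have "c (insert v \<tau>) = 0" by (rule is_chain_eq_0[OF c])
      then show ?thesis using False v by (simp add: chain_link_def)
    qed (simp add: chain_link_def v)
    have del_sum: "(\<Sum>x\<in>B - {v}. insert_sign x \<tau> * c (insert x \<tau>)) = bdry del_cx n (chain_del v c) \<tau>"
    proof -
      have "chain_del v c (insert x \<tau>) = c (insert x \<tau>)" if "x \<in> B - {v}" for x
        using that v by (auto simp: chain_del_def)
      then show ?thesis using del_face by (simp add: bdry_altdef del_cx_extensions[OF v] B_def)
    qed
    have "bdry cx n c \<tau> = (\<Sum>x\<in>B. insert_sign x \<tau> * c (insert x \<tau>))"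
      using True by (simp add: bdry_altdef B_def)
    also have "\<dots> = (\<Sum>x\<in>B - {v}. insert_sign x \<tau> * c (insert x \<tau>))
        + (if v \<in> B then insert_sign v \<tau> * c (insert v \<tau>) else 0)"
      using \<open>finite B\<close> by (simp add: sum_diff1)
    finally show ?thesis using v v_term del_sum by (simp add: chain_del_def)
  next
    case not_face: False
    have "\<not> (\<tau> \<in> del_cx \<and> finite \<tau> \<and> card \<tau> = n)" using not_face mem_del_cx_iff by blast
    then have del0: "bdry del_cx n (chain_del v c) \<tau> = 0" by (rule bdry_eq_0)
    have link0: "chain_link v c \<tau> = 0"
    proof (cases "v \<in> \<tau>")
      case False
      have "\<not> (insert v \<tau> \<in> cx \<and> finite (insert v \<tau>) \<and> card (insert v \<tau>) = Suc n)"
        using not_face False insert_mem_cx_card_iff[OF False] link_cx_subset del_cx_subset by blast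
      then have "c (insert v \<tau>) = 0" by (rule is_chain_eq_0[OF c])
      then show ?thesis by (simp add: chain_link_def)
    qed (simp add: chain_link_def)
    have "chain_del v (bdry cx n c) \<tau> = 0"
    proof (cases "v \<in> \<tau>")
      case False
      then have "bdry cx n c \<tau> = 0" using not_face by (intro bdry_eq_0) blast
      then show ?thesis by (simp add: chain_del_def)
    qed (simp add: chain_del_def)
    then show ?thesis using del0 link0 by simp
  qed
qed

lemma del_cycle_add_bdry_cone:
  fixes z y :: "'a set \<Rightarrow> 'k::field"
  assumes z: "is_chain cx (Suc n) z" and cyc: "bdry cx n z = (\<lambda>_. 0)"
    and y: "is_chain link_cx (Suc n) y" and y_bdry: "bdry link_cx n y = chain_link v z"
  defines "z' \<equiv> \<lambda>\<sigma>. z \<sigma> + bdry cx (Suc n) (chain_cone v y) \<sigma>"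
  shows "is_chain del_cx (Suc n) z'" and "bdry del_cx n z' = (\<lambda>_. 0)"
proof -
  have z'_chain: "is_chain cx (Suc n) z'"
    unfolding z'_def by (rule is_chain_add[OF z is_chain_bdry])
  have link_cone: "chain_link v (chain_cone v y) = y"
    by (rule chain_link_cone) (rule is_chain_link_cx_eq_0[OF y])
  have "chain_link v z' \<rho> = chain_link v z \<rho> + chain_link v (bdry cx (Suc n) (chain_cone v y)) \<rho>" for \<rho>
    by (simp add: chain_link_def z'_def distrib_left)
  then have link_z': "chain_link v z' = (\<lambda>_. 0)"
    using chain_link_bdry[where n = n and c = "chain_cone v y"] y_bdry
    by (simp add: link_cone fun_eq_iff)
  have del_z': "chain_del v z' = z'"
    by (rule chain_eqI[of v]) (simp_all add: chain_del_idem chain_link_chain_del link_z')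
  then show "is_chain del_cx (Suc n) z'"
    using is_chain_chain_del[OF z'_chain] by simp
  have "bdry cx n z' = (\<lambda>_. 0)"
    using cyc bdry_bdry[where n = n and c = "chain_cone v y",
        OF downward_closed_ind_complex finite_Union_ind_complex[OF finite_S]]
    by (simp add: z'_def bdry_add fun_eq_iff)
  then have "chain_del v (bdry cx n z') = (\<lambda>_. 0)" by (simp add: chain_del_def fun_eq_iff)
  then show "bdry del_cx n z' = (\<lambda>_. 0)"
    using chain_del_bdry[OF z'_chain] unfolding del_z' link_z' by (simp add: fun_eq_iff)
qed

text \<open>The long exact sequence of the pair \<open>(cx, del_cx)\<close>, whose relative homology is that of
  \<open>link_cx\<close> shifted by one: a non-bounding cycle either has a non-bounding link part, or it is
  homologous to a non-bounding cycle avoiding \<open>v\<close>.\<close>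

lemma red_hom_nonzero_del_or_link:
  fixes K :: "'k::field itself"
  assumes hom: "red_hom_nonzero K cx j" and "1 \<le> j"
  shows "red_hom_nonzero K del_cx j \<or> red_hom_nonzero K link_cx (j - 1)"
proof -
  obtain n where j: "j = Suc n" using assms(2) by (cases j) auto
  obtain z :: "'a set \<Rightarrow> 'k" where z: "is_chain cx (Suc n) z" and cyc: "bdry cx n z = (\<lambda>_. 0)"
    and not_bdry: "\<not> (\<exists>d. is_chain cx (Suc (Suc n)) d \<and> bdry cx (Suc n) d = z)"
    using hom unfolding red_hom_nonzero_def j by auto
  have w: "is_chain link_cx n (chain_link v z)" by (rule is_chain_chain_link[OF z])
  have w_cyc: "bdry link_cx (n - 1) (chain_link v z) = (\<lambda>_. 0)" if "0 < n"
  proof -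
    have "chain_link v (bdry cx (Suc (n - 1)) z) = (\<lambda>_. 0)"
      using cyc that by (simp add: chain_link_def fun_eq_iff)
    then show ?thesis using chain_link_bdry[where n = "n - 1" and c = z] by (simp add: fun_eq_iff)
  qed
  show ?thesis
  proof (cases "\<exists>y. is_chain link_cx (Suc n) y \<and> bdry link_cx n y = chain_link v z")
    case False
    then have "red_hom_nonzero K link_cx n"
      unfolding red_hom_nonzero_def using w w_cyc by auto
    then show ?thesis using j by simp
  next
    case True
    then obtain y where y: "is_chain link_cx (Suc n) y" and y_bdry: "bdry link_cx n y = chain_link v z"
      by blast
    define c where "c = chain_cone v y"
    define z' where "z' = (\<lambda>\<sigma>. z \<sigma> + bdry cx (Suc n) c \<sigma>)"
    have z': "is_chain del_cx (Suc n) z'" "bdry del_cx n z' = (\<lambda>_. 0)"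
      unfolding z'_def c_def by (rule del_cycle_add_bdry_cone[OF z cyc y y_bdry])+
    have "\<not> (\<exists>d. is_chain del_cx (Suc (Suc n)) d \<and> bdry del_cx (Suc n) d = z')"
    proof
      assume "\<exists>d. is_chain del_cx (Suc (Suc n)) d \<and> bdry del_cx (Suc n) d = z'"
      then obtain d where d: "is_chain del_cx (Suc (Suc n)) d" and d_bdry: "bdry del_cx (Suc n) d = z'"
        by blast
      have "bdry cx (Suc n) d = bdry del_cx (Suc n) d"
        by (rule bdry_subcomplex[OF del_cx_subset downward_closed_ind_complex
              finite_Union_ind_complex[OF finite_S] d])
      then have "bdry cx (Suc n) (\<lambda>\<sigma>. d \<sigma> - c \<sigma>) = z"
        using d_bdry by (simp add: bdry_diff z'_def fun_eq_iff)
      moreover have "is_chain cx (Suc (Suc n)) (\<lambda>\<sigma>. d \<sigma> - c \<sigma>)"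
        using is_chain_subset[OF del_cx_subset d] is_chain_chain_cone[OF y]
        unfolding c_def by (rule is_chain_diff)
      ultimately show False using not_bdry by blast
    qed
    then have "red_hom_nonzero K del_cx (Suc n)"
      unfolding red_hom_nonzero_def using z' by auto
    then show ?thesis using j by simp
  qed
qed

text \<open>If \<open>v\<close> is isolated, \<open>cx\<close> is a cone with apex \<open>v\<close>, and every cycle bounds the cone over its
  part avoiding \<open>v\<close>.\<close>

lemma not_red_hom_nonzero_isolated:
  fixes K :: "'k::field itself"
  assumes isolated: "\<forall>x\<in>S. \<not> E v x"
  shows "\<not> red_hom_nonzero K cx j"
proof
  assume "red_hom_nonzero K cx j"
  then obtain z :: "'a set \<Rightarrow> 'k" where z: "is_chain cx j z"
    and cyc: "0 < j \<longrightarrow> bdry cx (j - 1) z = (\<lambda>_. 0)"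
    and not_bdry: "\<not> (\<exists>d. is_chain cx (j + 1) d \<and> bdry cx j d = z)"
    unfolding red_hom_nonzero_def by auto
  have "S - insert v {x. E v x} = S - {v}" using isolated by blast
  then have link_eq: "link_cx = del_cx" by simp
  define c where "c = chain_cone v (chain_del v z)"
  have c: "is_chain cx (Suc j) c"
    unfolding c_def using is_chain_chain_del[OF z] link_eq by (simp add: is_chain_chain_cone)
  have link_c: "chain_link v c = chain_del v z"
    unfolding c_def by (rule chain_link_cone) (simp add: chain_del_def)
  have "bdry cx j c = z"
  proof (rule chain_eqI[of v])
    show "chain_del v (bdry cx j c) = chain_del v z"
      using chain_del_bdry[OF c] link_c by (simp add: c_def chain_del_cone bdry_zero)
    show "chain_link v (bdry cx j c) = chain_link v z"
    proof (cases j)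
      case 0
      have "chain_link v (bdry cx 0 c) = (\<lambda>_. 0)" by (rule chain_link_size_0[OF is_chain_bdry])
      moreover have "chain_link v z = (\<lambda>_. 0)" by (rule chain_link_size_0) (use z 0 in simp)
      ultimately show ?thesis using 0 by simp
    next
      case (Suc m)
      then have "chain_del v (bdry cx m z) = (\<lambda>_. 0)" using cyc by (simp add: chain_del_def fun_eq_iff)
      then have "chain_link v z = (\<lambda>\<rho>. - bdry link_cx m (chain_del v z) \<rho>)"
        using chain_del_bdry[where n = m and c = z] z Suc link_eq by (simp add: fun_eq_iff eq_neg_iff_add_eq_0 add.commute)
      then show ?thesis using chain_link_bdry[where n = m and c = c] link_c Suc by simp
    qed
  qed
  then show False using not_bdry c by auto
qed

end

lemma induced_matching_edge:
  "induced_matching S E M \<Longrightarrow> e \<in> M \<Longrightarrow> \<exists>a b. a \<in> S \<and> b \<in> S \<and> E a b \<and> e = {a, b}"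
  by (simp add: induced_matching_def)

lemma induced_matching_subset_Pow:
  assumes "induced_matching S E M"
  shows "M \<subseteq> Pow S"
proof
  fix e assume "e \<in> M"
  then obtain a b where "a \<in> S" "b \<in> S" "e = {a, b}" using induced_matching_edge[OF assms] by blast
  then show "e \<in> Pow S" by simp
qed

lemma induced_matching_mono:
  assumes "S \<subseteq> T" "induced_matching S E M"
  shows "induced_matching T E M"
proof -
  have "\<exists>a b. a \<in> T \<and> b \<in> T \<and> E a b \<and> e = {a, b}" if "e \<in> M" for e
    using induced_matching_edge[OF assms(2) that] assms(1) by blast
  then show ?thesis using assms(2) unfolding induced_matching_def by simp
qed

lemma finite_card_induced_matchings: "finite S \<Longrightarrow> finite {card M | M. induced_matching S E M}"
proof (rule finite_subset)
  assume "finite S"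
  have "card M \<le> card (Pow S)" if "induced_matching S E M" for M
    using induced_matching_subset_Pow[OF that] \<open>finite S\<close> by (simp add: card_mono)
  then show "{card M | M. induced_matching S E M} \<subseteq> {..card (Pow S)}" by auto
qed simp

lemma card_le_im: "finite S \<Longrightarrow> induced_matching S E M \<Longrightarrow> card M \<le> im S E"
  unfolding im_def by (rule Max_ge[OF finite_card_induced_matchings]) auto

lemma im_attained:
  assumes "finite S"
  obtains M where "induced_matching S E M" "card M = im S E"
proof -
  have "induced_matching S E {}" by (simp add: induced_matching_def)
  then have "im S E \<in> {card M | M. induced_matching S E M}"
    unfolding im_def using finite_card_induced_matchings[OF assms] by (intro Max_in) auto
  then show ?thesis using that by auto
qed

lemma im_mono:
  assumes "finite T" "S \<subseteq> T"
  shows "im S E \<le> im T E"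
proof -
  obtain M where "induced_matching S E M" "card M = im S E"
    using finite_subset[OF assms(2,1)] by (rule im_attained)
  then show ?thesis
    using card_le_im[OF assms(1) induced_matching_mono[OF assms(2)]] by metis
qed

lemma induced_matching_apart:
  "induced_matching S E M \<Longrightarrow> e \<in> M \<Longrightarrow> f \<in> M \<Longrightarrow> e \<noteq> f
    \<Longrightarrow> e \<inter> f = {} \<and> (\<forall>x\<in>e. \<forall>y\<in>f. \<not> E x y)"
  by (simp add: induced_matching_def)

lemma induced_matching_insert_edge:
  assumes M: "induced_matching L E M" and sym: "\<And>a b. E a b \<Longrightarrow> E b a"
    and "L \<subseteq> S" "u \<in> S" "v \<in> S" "E u v"
    and away: "\<forall>y\<in>L. y \<noteq> u \<and> y \<noteq> v \<and> \<not> E u y \<and> \<not> E v y"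
  shows "induced_matching S E (insert {u, v} M)"
proof -
  have apart: "\<forall>x\<in>e. x \<notin> {u, v} \<and> \<not> E x u \<and> \<not> E x v \<and> \<not> E u x \<and> \<not> E v x" if "e \<in> M" for e
    using induced_matching_subset_Pow[OF M] that away sym by blast
  have edges: "\<forall>e\<in>insert {u, v} M. \<exists>a b. a \<in> S \<and> b \<in> S \<and> E a b \<and> e = {a, b}"
    using induced_matching_edge[OF M] assms(3-6) by blast
  have pairs: "\<forall>e\<in>insert {u, v} M. \<forall>f\<in>insert {u, v} M.
      e \<noteq> f \<longrightarrow> e \<inter> f = {} \<and> (\<forall>x\<in>e. \<forall>y\<in>f. \<not> E x y)"
  proof (intro ballI impI)
    fix e f assume e: "e \<in> insert {u, v} M" and f: "f \<in> insert {u, v} M" and "e \<noteq> f"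
    show "e \<inter> f = {} \<and> (\<forall>x\<in>e. \<forall>y\<in>f. \<not> E x y)"
    proof (cases "e = {u, v}")
      case True
      then have "f \<in> M" using f \<open>e \<noteq> f\<close> by blast
      then show ?thesis unfolding True using apart by auto
    next
      case False
      then have "e \<in> M" using e by blast
      show ?thesis
      proof (cases "f = {u, v}")
        case True
        then show ?thesis unfolding True using apart[OF \<open>e \<in> M\<close>] by auto
      next
        case False
        then have "f \<in> M" using f by blast
        then show ?thesis by (rule induced_matching_apart[OF M \<open>e \<in> M\<close> _ \<open>e \<noteq> f\<close>])
      qed
    qed
  qed
  show ?thesis unfolding induced_matching_def by (intro conjI edges pairs)
qed

lemma Suc_im_le_im_add_edge:
  assumes "finite S" "\<And>a b. E a b \<Longrightarrow> E b a" "L \<subseteq> S" "u \<in> S" "v \<in> S" "E u v"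
    and away: "\<forall>y\<in>L. y \<noteq> u \<and> y \<noteq> v \<and> \<not> E u y \<and> \<not> E v y"
  shows "Suc (im L E) \<le> im S E"
proof -
  have "finite L" using assms(1,3) by (rule finite_subset[rotated])
  then obtain M where M: "induced_matching L E M" "card M = im L E" by (rule im_attained)
  have "M \<subseteq> Pow L" by (rule induced_matching_subset_Pow[OF M(1)])
  then have "finite M" using \<open>finite L\<close> by (simp add: finite_subset)
  have "u \<notin> L" using away by blast
  then have "{u, v} \<notin> Pow L" by simp
  then have "{u, v} \<notin> M" using \<open>M \<subseteq> Pow L\<close> by blast
  have "card (insert {u, v} M) = Suc (im L E)"
    using \<open>finite M\<close> \<open>{u, v} \<notin> M\<close> M(2) by simp
  then show ?thesis
    using card_le_im[OF assms(1) induced_matching_insert_edge[OF M(1) assms(2-7)]] by simp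
qed

definition clique :: "('a \<Rightarrow> 'a \<Rightarrow> bool) \<Rightarrow> 'a set \<Rightarrow> bool" where
  "clique E C \<longleftrightarrow> (\<forall>a\<in>C. \<forall>b\<in>C. a \<noteq> b \<longrightarrow> E a b)"

lemma claw_free_subset: "claw_free V E \<Longrightarrow> S \<subseteq> V \<Longrightarrow> claw_free S E"
  unfolding claw_free_def by blast

lemma claw_free_clique_neighbours:
  assumes "claw_free S E" "\<And>a b. E a b \<Longrightarrow> E b a" "u \<in> S" "v \<in> S" "E u v"
  shows "clique E ((S - insert v {x. E v x}) \<inter> {x. E u x})"
  unfolding clique_def
proof (intro ballI impI)
  fix a b assume a: "a \<in> (S - insert v {x. E v x}) \<inter> {x. E u x}"
    and b: "b \<in> (S - insert v {x. E v x}) \<inter> {x. E u x}" and "a \<noteq> b"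
  then have "\<not> E a v" "\<not> E b v" using assms(2) by blast+
  then show "E a b"
    using assms(1,3-5) a b \<open>a \<noteq> b\<close> unfolding claw_free_def by blast
qed

text \<open>Each deleted clique vertex \<open>w\<close> either keeps the degree or passes to the link of \<open>w\<close>, which
  already misses the rest of the clique.\<close>

lemma red_hom_nonzero_remove_clique:
  fixes K :: "'k::field itself" and L :: "'a::linorder set"
  assumes sym: "\<And>a b. E a b \<Longrightarrow> E b a" and irrefl: "\<And>a. \<not> E a a"
    and "finite L" "C \<subseteq> L" "clique E C" "red_hom_nonzero K (ind_complex E L) i"
  shows "\<exists>L' i'. L' \<subseteq> L - C \<and> i \<le> Suc i' \<and> red_hom_nonzero K (ind_complex E L') i'"
proof -
  have "finite C" using assms(3,4) by (rule finite_subset[rotated])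
  then show ?thesis using assms(3-)
  proof (induction C arbitrary: L rule: finite_induct)
    case empty
    then show ?case by (intro exI[of _ L] exI[of _ i]) simp
  next
    case (insert w C)
    show ?case
    proof (cases "i = 0")
      case True
      then show ?thesis
        using red_hom_nonzero_ind_complex_empty[of K E] by (intro exI[of _ "{}"] exI[of _ 0]) simp
    next
      case False
      have "vertex_split E L w"
        unfolding vertex_split_def using sym irrefl insert.prems(1,2) by blast
      then interpret vertex_split E L w .
      have "clique E C" using insert.prems(3) by (simp add: clique_def)
      have "red_hom_nonzero K del_cx i \<or> red_hom_nonzero K link_cx (i - 1)"
        using red_hom_nonzero_del_or_link[OF insert.prems(4)] False by simp
      then show ?thesis
      proof
        assume del: "red_hom_nonzero K del_cx i"
        have "finite (L - {w})" "C \<subseteq> L - {w}" using insert.prems(1,2) insert.hyps(2) by auto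
        then obtain L' i' where "L' \<subseteq> L - {w} - C" "i \<le> Suc i'" "red_hom_nonzero K (ind_complex E L') i'"
          using insert.IH[OF _ _ \<open>clique E C\<close> del] by blast
        then show ?thesis by (intro exI[of _ L'] exI[of _ i']) auto
      next
        assume link: "red_hom_nonzero K link_cx (i - 1)"
        have "C \<subseteq> {x. E w x}"
        proof
          fix x assume "x \<in> C"
          then show "x \<in> {x. E w x}"
            using insert.prems(3) insert.hyps(2) unfolding clique_def by auto
        qed
        then have "L - insert w {x. E w x} \<subseteq> L - insert w C" by blast
        then show ?thesis
          using link by (intro exI[of _ "L - insert w {x. E w x}"] exI[of _ "i - 1"]) simp
      qed
    qed
  qed
qed

lemma red_hom_nonzero_edgeless:
  fixes K :: "'k::field itself" and S :: "'a::linorder set"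
  assumes sym: "\<And>a b. E a b \<Longrightarrow> E b a" and irrefl: "\<And>a. \<not> E a a"
    and "finite S" "\<forall>u\<in>S. \<forall>v\<in>S. \<not> E u v" and hom: "red_hom_nonzero K (ind_complex E S) j"
  shows "j = 0"
proof -
  have "S = {}"
  proof (rule ccontr)
    assume "S \<noteq> {}"
    then obtain v where "v \<in> S" by blast
    then interpret vertex_split E S v using sym irrefl assms(3) by unfold_locales
    have "\<forall>x\<in>S. \<not> E v x" using assms(4) \<open>v \<in> S\<close> by blast
    from not_red_hom_nonzero_isolated[OF this, where K = K and j = j] hom
    show False by contradiction
  qed
  then have "\<exists>\<sigma>\<in>ind_complex E {}. finite \<sigma> \<and> card \<sigma> = j"
    using red_hom_nonzero_imp_face[OF hom] by simp
  then show ?thesis by (auto simp: mem_ind_complex)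
qed

text \<open>By claw-freeness the neighbours of \<open>u\<close> in the link of \<open>v\<close> form a clique, and once it is
  removed the edge \<open>uv\<close> can be added to any induced matching of what is left.\<close>

lemma red_hom_nonzero_link_le_twice_im:
  fixes K :: "'k::field itself" and S :: "'a::linorder set"
  assumes sym: "\<And>a b. E a b \<Longrightarrow> E b a" and irrefl: "\<And>a. \<not> E a a"
    and "finite S" "claw_free S E" and uv: "u \<in> S" "v \<in> S" "E u v"
    and IH: "\<And>T i. T \<subseteq> S - {v} \<Longrightarrow> red_hom_nonzero K (ind_complex E T) i \<Longrightarrow> i \<le> 2 * im T E"
    and link: "red_hom_nonzero K (ind_complex E (S - insert v {x. E v x})) i"
  shows "Suc i \<le> 2 * im S E"
proof -
  define L0 where "L0 = S - insert v {x. E v x}"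
  define C where "C = L0 \<inter> {x. E u x}"
  have clique: "clique E C"
    unfolding C_def L0_def by (rule claw_free_clique_neighbours[OF assms(4) sym uv])
  have fin: "finite L0" and sub: "C \<subseteq> L0" using assms(3) by (auto simp: L0_def C_def)
  note red_hom_nonzero_remove_clique[where E = E, OF sym irrefl fin sub clique link[folded L0_def]]
  then obtain L i' where L: "L \<subseteq> L0 - C" and "i \<le> Suc i'"
    and hom: "red_hom_nonzero K (ind_complex E L) i'"
    by blast
  have "L \<subseteq> S - {v}" using L unfolding L0_def by auto
  then have "i' \<le> 2 * im L E" using hom by (rule IH)
  moreover have "Suc (im L E) \<le> im S E"
  proof (rule Suc_im_le_im_add_edge[where E = E, OF assms(3) sym _ uv])
    show "L \<subseteq> S" using L by (auto simp: L0_def)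
    show "\<forall>y\<in>L. y \<noteq> u \<and> y \<noteq> v \<and> \<not> E u y \<and> \<not> E v y"
      using L sym[OF uv(3)] by (auto simp: L0_def C_def)
  qed
  ultimately show ?thesis using \<open>i \<le> Suc i'\<close> by linarith
qed

lemma red_hom_nonzero_le_twice_im:
  fixes K :: "'k::field itself" and S :: "'a::linorder set"
  assumes sym: "\<And>a b. E a b \<Longrightarrow> E b a" and irrefl: "\<And>a. \<not> E a a"
    and "finite S" "claw_free S E" "red_hom_nonzero K (ind_complex E S) j"
  shows "j \<le> 2 * im S E"
  using assms(3-)
proof (induction "card S" arbitrary: S j rule: less_induct)
  case less
  have IH: "i \<le> 2 * im T E"
    if T: "T \<subseteq> S - {v}" "v \<in> S" and hom: "red_hom_nonzero K (ind_complex E T) i" for T v i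
  proof -
    have "finite T" using finite_subset[OF T(1)] less.prems(1) by simp
    moreover have "card T < card S"
      using less.prems(1) T by (intro psubset_card_mono) auto
    moreover have "claw_free T E" by (rule claw_free_subset[OF less.prems(2)]) (use T(1) in blast)
    ultimately show ?thesis using hom by (intro less.hyps) auto
  qed
  show ?case
  proof (cases "\<exists>u\<in>S. \<exists>v\<in>S. E u v")
    case False
    then show ?thesis
      using red_hom_nonzero_edgeless[where E = E, OF sym irrefl less.prems(1) _ less.prems(3)] by simp
  next
    case True
    then obtain u v where uv: "u \<in> S" "v \<in> S" "E u v" by blast
    interpret vertex_split E S v using sym irrefl less.prems(1) uv(2) by unfold_locales
    show ?thesis
    proof (cases "j = 0")
      case False
      then have "red_hom_nonzero K del_cx j \<or> red_hom_nonzero K link_cx (j - 1)"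
        using red_hom_nonzero_del_or_link[OF less.prems(3)] by simp
      then show ?thesis
      proof
        assume "red_hom_nonzero K del_cx j"
        then have "j \<le> 2 * im (S - {v}) E" by (intro IH[OF _ uv(2)]) auto
        also have "\<dots> \<le> 2 * im S E" using im_mono[OF less.prems(1)] by simp
        finally show ?thesis .
      next
        assume link: "red_hom_nonzero K link_cx (j - 1)"
        have "\<And>T i. T \<subseteq> S - {v} \<Longrightarrow> red_hom_nonzero K (ind_complex E T) i \<Longrightarrow> i \<le> 2 * im T E"
          using IH uv(2) by blast
        from red_hom_nonzero_link_le_twice_im[where E = E, OF sym irrefl less.prems(1,2) uv this link]
        have "Suc (j - 1) \<le> 2 * im S E" .
        then show ?thesis using False by simp
      qed
    qed simp
  qed
qed

lemma reg_leI:
  fixes K :: "'k::field itself" and V :: "'a::linorder set"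
  assumes "\<And>S j. S \<subseteq> V \<Longrightarrow> red_hom_nonzero K (ind_complex E S) j \<Longrightarrow> j \<le> b"
  shows "reg K V E \<le> b"
proof -
  define A where "A = {j. \<exists>S. S \<subseteq> V \<and> red_hom_nonzero K (ind_complex E S) j}"
  have bound: "\<forall>j\<in>A. j \<le> b" using assms by (auto simp: A_def)
  then have "finite A" by (intro finite_subset[of A "{..b}"]) auto
  txt \<open>The empty subgraph puts \<open>0\<close> into \<open>A\<close>, so \<open>Max\<close> is not taken over the empty set.\<close>
  moreover have "0 \<in> A"
    unfolding A_def using red_hom_nonzero_ind_complex_empty[of K E] by auto
  ultimately show ?thesis
    unfolding reg_def A_def[symmetric] using bound by (subst Max_le_iff) auto
qed

theorem mainTheorem9:
  fixes V :: "'a::linorder set" and E :: "'a \<Rightarrow> 'a \<Rightarrow> bool"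
  assumes "simple_graph V E"
    and "claw_free V E"
  shows "reg TYPE('k::field) V E \<le> 2 * im V E"
proof (rule reg_leI)
  have finite: "finite V" and sym: "\<And>a b. E a b \<Longrightarrow> E b a" and irrefl: "\<And>a. \<not> E a a"
    using assms(1) unfolding simple_graph_def by blast+
  fix S j assume S: "S \<subseteq> V" and hom: "red_hom_nonzero TYPE('k) (ind_complex E S) j"
  have "j \<le> 2 * im S E"
    by (rule red_hom_nonzero_le_twice_im[where E = E, OF sym irrefl finite_subset[OF S finite]
          claw_free_subset[OF assms(2) S] hom])
  also have "\<dots> \<le> 2 * im V E" using im_mono[OF finite S] by simp
  finally show "j \<le> 2 * im V E" .
qed

end
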